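(* Let $n\ge5$ be odd and $M$ an $n\times n$ HW-matrix. There is no spin$^c$ set for $M$.
   Context: $\mathcal S=\{0,1,2,3\}$ is the Klein four-group ($\mathbb Z_2$-vector space) with $x+x=0$, $1+2=3$, $1+3=2$, $2+3=1$. $\mathcal P_n$ is the power set of $\{1,\dots,n\}$ (addition = symmetric difference, product = intersection); $|U|_2=|U|\bmod 2$; $J_M(U)=\{j:\sum_{i\in U}M_{ij}=1\}$. $M$ is an HW-matrix if it has $1$ on the diagonal and $2$ or $3$ off the diagonal, all column sums are $0$, and $J_M(U)\ne\emptyset$ for all $U\ne\emptyset,\{1,\dots,n\}$. $S\in\mathcal P_n$ is a spin$^c$ set for $M$ if $|(J_M(U)+U)\cap S|_2=\binom{|U|}2\bmod 2$ for all $U\in\mathcal P_n$. *)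

theory Defs
  imports Main
begin

text \<open>The Klein four-group S = {0,1,2,3}, realised as naturals below 4 with
  bitwise exclusive-or as addition (0 neutral, x+x=0, 1+2=3, 1+3=2, 2+3=1).\<close>

definition kplus :: "nat \<Rightarrow> nat \<Rightarrow> nat" where
  "kplus a b = xor a b"

definition ksum :: "(nat \<Rightarrow> nat) \<Rightarrow> nat set \<Rightarrow> nat" where
  "ksum f U = foldr (\<lambda>i acc. kplus (f i) acc) (sorted_list_of_set U) 0"

definition JM :: "(nat \<Rightarrow> nat \<Rightarrow> nat) \<Rightarrow> nat \<Rightarrow> nat set \<Rightarrow> nat set" where
  "JM M n U = {j \<in> {1..n}. ksum (\<lambda>i. M i j) U = 1}"

definition HW_matrix :: "nat \<Rightarrow> (nat \<Rightarrow> nat \<Rightarrow> nat) \<Rightarrow> bool" where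
  "HW_matrix n M \<longleftrightarrow>
     (\<forall>i\<in>{1..n}. M i i = 1) \<and>
     (\<forall>i\<in>{1..n}. \<forall>j\<in>{1..n}. i \<noteq> j \<longrightarrow> M i j = 2 \<or> M i j = 3) \<and>
     (\<forall>j\<in>{1..n}. ksum (\<lambda>i. M i j) {1..n} = 0) \<and>
     (\<forall>U. U \<subseteq> {1..n} \<and> U \<noteq> {} \<and> U \<noteq> {1..n} \<longrightarrow> JM M n U \<noteq> {})"

definition symdiff :: "nat set \<Rightarrow> nat set \<Rightarrow> nat set" where
  "symdiff A B = (A - B) \<union> (B - A)"

definition spinc_set :: "nat \<Rightarrow> (nat \<Rightarrow> nat \<Rightarrow> nat) \<Rightarrow> nat set \<Rightarrow> bool" where
  "spinc_set n M S \<longleftrightarrow> S \<subseteq> {1..n} \<and>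
     (\<forall>U. U \<subseteq> {1..n} \<longrightarrow>
        card (symdiff (JM M n U) U \<inter> S) mod 2 = (card U choose 2) mod 2)"

end

theory Submission
  imports Defs
begin

text \<open>Write A i j for M i j = 3 and colour every index k by the parity T k of the number of
  j \<in> S with M k j odd. The spin^c condition for two-element sets U = {k, l} says that, on S,
  A is a tournament inside each colour class and symmetric between the two classes, and that the
  (at most two) indices outside S have different colours; the condition J_M(U) \<noteq> {} for
  three-element sets makes each tournament transitive, i.e. a linear order. The vanishing column
  sums then say that, for k \<in> S, the rank of k in its class plus the number of its neighbours in
  the other class has a parity depending only on the class. Those cross neighbourhoods grow along
  the order, hence by at least one per step, and comparing the least and greatest elements of the
  two classes forces n to be even or at most 3.\<close>

section \<open>Sums in the Klein four-group\<close>

lemma kplus_bits: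
  assumes "a < 4" "b < 4"
  shows "kplus a b = of_bool (odd a \<noteq> odd b) + 2 * of_bool ((2 \<le> a) \<noteq> (2 \<le> b))"
proof -
  have "a \<in> {0, 1, 2, 3}" "b \<in> {0, 1, 2, 3}" using assms by auto
  then show ?thesis unfolding kplus_def by auto
qed

lemma foldr_kplus_bits:
  assumes "\<forall>i\<in>set xs. f i < 4"
  shows "foldr (\<lambda>i acc. kplus (f i) acc) xs 0 =
    of_bool (odd (length (filter (\<lambda>i. odd (f i)) xs)))
    + 2 * of_bool (odd (length (filter (\<lambda>i. 2 \<le> f i) xs)))"
  using assms
proof (induction xs)
  case (Cons x xs)
  let ?s = "foldr (\<lambda>i acc. kplus (f i) acc) xs 0"
  have IH: "?s = of_bool (odd (length (filter (\<lambda>i. odd (f i)) xs)))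
    + 2 * of_bool (odd (length (filter (\<lambda>i. 2 \<le> f i) xs)))"
    using Cons by simp
  have "?s < 4" unfolding IH by simp
  then have "foldr (\<lambda>i acc. kplus (f i) acc) (x # xs) 0
      = of_bool (odd (f x) \<noteq> odd ?s) + 2 * of_bool ((2 \<le> f x) \<noteq> (2 \<le> ?s))"
    using kplus_bits[of "f x" ?s] Cons.prems by simp
  moreover have "odd ?s \<longleftrightarrow> odd (length (filter (\<lambda>i. odd (f i)) xs))"
    and "2 \<le> ?s \<longleftrightarrow> odd (length (filter (\<lambda>i. 2 \<le> f i) xs))"
    unfolding IH by auto
  ultimately show ?case by auto
qed simp

lemma ksum_bits:
  assumes "finite U" "\<forall>i\<in>U. f i < 4"
  shows "ksum f U = of_bool (odd (card {i\<in>U. odd (f i)})) + 2 * of_bool (odd (card {i\<in>U. 2 \<le> f i}))"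
proof -
  have length_filter: "length (filter P (sorted_list_of_set U)) = card {i\<in>U. P i}" for P
    using distinct_card[of "filter P (sorted_list_of_set U)"] assms(1) by auto
  show ?thesis
    unfolding ksum_def using foldr_kplus_bits[of "sorted_list_of_set U" f] assms
    by (simp add: length_filter)
qed

section \<open>HW-matrices and spin^c sets\<close>

lemma odd_card_pair_filter:
  assumes "k \<noteq> l"
  shows "odd (card {x\<in>{k, l}. P x}) \<longleftrightarrow> P k \<noteq> P l"
proof -
  have "{x\<in>{k, l}. P x} = (if P k then {k} else {}) \<union> (if P l then {l} else {})" by auto
  then show ?thesis using assms by auto
qed

lemma odd_card_filter_neq:
  assumes "finite X"
  shows "odd (card {x\<in>X. P x \<noteq> Q x}) \<longleftrightarrow> odd (card {x\<in>X. P x}) \<noteq> odd (card {x\<in>X. Q x})"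
proof -
  let ?P = "{x\<in>X. P x}" and ?Q = "{x\<in>X. Q x}"
  have "card ?P + card ?Q = card (?P \<union> ?Q) + card (?P \<inter> ?Q)"
    by (rule card_Un_Int) (use assms in auto)
  moreover have "?P \<union> ?Q = {x\<in>X. P x \<noteq> Q x} \<union> (?P \<inter> ?Q)" by auto
  moreover have "card ({x\<in>X. P x \<noteq> Q x} \<union> (?P \<inter> ?Q)) = card {x\<in>X. P x \<noteq> Q x} + card (?P \<inter> ?Q)"
    by (rule card_Un_disjoint) (use assms in auto)
  ultimately have "card ?P + card ?Q = card {x\<in>X. P x \<noteq> Q x} + 2 * card (?P \<inter> ?Q)" by simp
  then show ?thesis by presburger
qed

lemma HW_matrix_entry:
  assumes "HW_matrix n M" "i \<in> {1..n}" "j \<in> {1..n}"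
  shows "M i j < 4" and "2 \<le> M i j \<longleftrightarrow> i \<noteq> j" and "odd (M i j) \<longleftrightarrow> i = j \<or> M i j = 3"
proof -
  have "\<forall>i\<in>{1..n}. M i i = 1" "\<forall>i\<in>{1..n}. \<forall>j\<in>{1..n}. i \<noteq> j \<longrightarrow> M i j = 2 \<or> M i j = 3"
    using assms(1) by (simp_all add: HW_matrix_def)
  then have "M i j = 1 \<and> i = j \<or> i \<noteq> j \<and> (M i j = 2 \<or> M i j = 3)"
    using assms(2,3) by (cases "i = j") auto
  then show "M i j < 4" "2 \<le> M i j \<longleftrightarrow> i \<noteq> j" "odd (M i j) \<longleftrightarrow> i = j \<or> M i j = 3"
    by auto
qed

lemma HW_column_ksum:
  assumes "HW_matrix n M" "U \<subseteq> {1..n}" "j \<in> {1..n}"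
  shows "ksum (\<lambda>i. M i j) U
    = of_bool (odd (card {i\<in>U. i = j \<or> M i j = 3})) + 2 * of_bool (odd (card (U - {j})))"
proof -
  have "finite U" using assms(2) finite_subset by blast
  moreover have "\<forall>i\<in>U. M i j < 4" using HW_matrix_entry(1)[OF assms(1) _ assms(3)] assms(2) by auto
  moreover have "{i\<in>U. odd (M i j)} = {i\<in>U. i = j \<or> M i j = 3}" "{i\<in>U. 2 \<le> M i j} = U - {j}"
    using HW_matrix_entry(2,3)[OF assms(1) _ assms(3)] assms(2,3) by auto
  ultimately show ?thesis using ksum_bits[of U "\<lambda>i. M i j"] by simp
qed

lemma mem_JM_iff:
  assumes "HW_matrix n M" "U \<subseteq> {1..n}" "j \<in> {1..n}"
  shows "j \<in> JM M n U \<longleftrightarrow> odd (card {i\<in>U. i = j \<or> M i j = 3}) \<and> even (card (U - {j}))"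
  using HW_column_ksum[OF assms] assms(3) unfolding JM_def by auto

lemma HW_column_threes_odd:
  assumes "HW_matrix n M" "j \<in> {1..n}"
  shows "odd (card {i\<in>{1..n} - {j}. M i j = 3})"
proof -
  have "ksum (\<lambda>i. M i j) {1..n} = 0" using assms unfolding HW_matrix_def by blast
  then have "even (card {i\<in>{1..n}. i = j \<or> M i j = 3})"
    using HW_column_ksum[OF assms(1) _ assms(2)] by (simp split: if_splits)
  moreover have "{i\<in>{1..n}. i = j \<or> M i j = 3} = insert j {i\<in>{1..n} - {j}. M i j = 3}"
    using assms(2) by auto
  ultimately show ?thesis by simp
qed

lemma mem_JM_pair_iff:
  assumes "HW_matrix n M" "k \<in> {1..n}" "l \<in> {1..n}" "k \<noteq> l" "j \<in> {1..n}"
  shows "j \<in> JM M n {k, l} \<longleftrightarrow> j \<notin> {k, l} \<and> (M k j = 3) \<noteq> (M l j = 3)"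
proof (cases "j \<in> {k, l}")
  case True
  then have "card ({k, l} - {j}) = 1" using assms(4) by auto
  then show ?thesis using mem_JM_iff[OF assms(1) _ assms(5)] assms(2,3) True by simp
next
  case False
  then have "card ({k, l} - {j}) = 2" "{i\<in>{k, l}. i = j \<or> M i j = 3} = {i\<in>{k, l}. M i j = 3}"
    using assms(4) by auto
  then show ?thesis
    using mem_JM_iff[OF assms(1) _ assms(5)] assms(2,3) False odd_card_pair_filter[OF assms(4)] by simp
qed

lemma mem_JM_triple_threes_eq:
  assumes "HW_matrix n M" "{a, b, c} \<subseteq> {1..n}" "b \<noteq> c" "a \<in> JM M n {a, b, c}"
  shows "M b a = 3 \<longleftrightarrow> M c a = 3"
proof -
  have a: "a \<in> {1..n}" using assms(2) by simp
  have JM: "odd (card {i\<in>{a, b, c}. i = a \<or> M i a = 3}) \<and> even (card ({a, b, c} - {a}))"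
    using mem_JM_iff[OF assms(1,2) a] assms(4) by blast
  have "a \<notin> {b, c}"
  proof
    assume "a \<in> {b, c}"
    then have "{a, b, c} - {a} = {b, c} - {a}" by blast
    then have "card ({a, b, c} - {a}) = 1" using \<open>a \<in> {b, c}\<close> assms(3) by simp
    then show False using JM by simp
  qed
  then have "{i\<in>{a, b, c}. i = a \<or> M i a = 3} = insert a {i\<in>{b, c}. M i a = 3}" by auto
  then have "even (card {i\<in>{b, c}. M i a = 3})" using JM \<open>a \<notin> {b, c}\<close> by simp
  then show ?thesis using odd_card_pair_filter[OF assms(3), of "\<lambda>i. M i a = 3"] by simp
qed

lemma HW_triangle:
  assumes "HW_matrix n M" "4 \<le> n" "{i, j, k} \<subseteq> {1..n}" "i \<noteq> j" "i \<noteq> k" "j \<noteq> k"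
  shows "(M j i = 3 \<longleftrightarrow> M k i = 3) \<or> (M i j = 3 \<longleftrightarrow> M k j = 3) \<or> (M i k = 3 \<longleftrightarrow> M j k = 3)"
proof -
  have "card {i, j, k} = 3" using assms(4-6) by simp
  then have "{i, j, k} \<noteq> {1..n}" using assms(2) by auto
  then obtain m where m: "m \<in> JM M n {i, j, k}"
    using assms(1,3) unfolding HW_matrix_def by blast
  then have "m \<in> {1..n}" unfolding JM_def by simp
  then have "m \<in> {i, j, k}"
    using m mem_JM_iff[OF assms(1,3)] \<open>card {i, j, k} = 3\<close> by (cases "m \<in> {i, j, k}") auto
  then show ?thesis
    using mem_JM_triple_threes_eq[OF assms(1), of i j k] mem_JM_triple_threes_eq[OF assms(1), of j i k]
      mem_JM_triple_threes_eq[OF assms(1), of k i j] assms(3-6) m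
    by (auto simp: insert_commute)
qed

definition row_parity :: "(nat \<Rightarrow> nat \<Rightarrow> nat) \<Rightarrow> nat set \<Rightarrow> nat \<Rightarrow> bool" where
  "row_parity M S k \<longleftrightarrow> odd (card {j\<in>S. odd (M k j)})"

lemma row_parity_eq_iff:
  assumes "HW_matrix n M" "spinc_set n M S" "k \<in> {1..n}" "l \<in> {1..n}" "k \<noteq> l"
  shows "row_parity M S k = row_parity M S l \<longleftrightarrow> (k \<in> S \<and> M l k = 3) \<noteq> (l \<in> S \<and> M k l = 3)"
proof -
  have S: "S \<subseteq> {1..n}" using assms(2) unfolding spinc_set_def by blast
  then have "finite S" using finite_subset by blast
  let ?E = "symdiff (JM M n {k, l}) {k, l}"
  let ?D = "\<lambda>j. odd (M k j) \<noteq> odd (M l j)" and ?F = "\<lambda>j. j = k \<and> M l k = 3 \<or> j = l \<and> M k l = 3"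
  have "card (?E \<inter> S) mod 2 = (card {k, l} choose 2) mod 2"
    using assms(2-4) unfolding spinc_set_def by simp
  moreover have "card {k, l} choose 2 = 1" using assms(5) by (simp add: numeral_2_eq_2)
  ultimately have odd_E: "odd (card (?E \<inter> S))" by (simp add: odd_iff_mod_2_eq_one)
  have "j \<in> ?E \<longleftrightarrow> ?D j \<noteq> ?F j" if "j \<in> S" for j
  proof -
    have j: "j \<in> {1..n}" using that S by blast
    show ?thesis
      using mem_JM_pair_iff[OF assms(1,3,4,5) j] HW_matrix_entry(3)[OF assms(1) assms(3) j]
        HW_matrix_entry(3)[OF assms(1) assms(4) j] assms(5)
      unfolding symdiff_def by auto
  qed
  then have "?E \<inter> S = {j\<in>S. ?D j \<noteq> ?F j}" by auto
  with odd_E have "odd (card {j\<in>S. ?D j}) \<noteq> odd (card {j\<in>S. ?F j})"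
    using odd_card_filter_neq[OF \<open>finite S\<close>, of ?D ?F] by simp
  moreover have "odd (card {j\<in>S. ?D j}) \<longleftrightarrow> row_parity M S k \<noteq> row_parity M S l"
    unfolding row_parity_def by (rule odd_card_filter_neq[OF \<open>finite S\<close>])
  moreover have "odd (card {j\<in>S. ?F j}) \<longleftrightarrow> (k \<in> S \<and> M l k = 3) \<noteq> (l \<in> S \<and> M k l = 3)"
  proof -
    have "{j\<in>S. ?F j} = {j\<in>{k, l}. j \<in> S \<and> ?F j}" by auto
    then show ?thesis using odd_card_pair_filter[OF assms(5), of "\<lambda>j. j \<in> S \<and> ?F j"] assms(5) by simp
  qed
  ultimately show ?thesis by argo
qed

section \<open>Transitive tournaments\<close>

definition transitive_tournament :: "'a set \<Rightarrow> ('a \<Rightarrow> 'a \<Rightarrow> bool) \<Rightarrow> bool" where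
  "transitive_tournament X R \<longleftrightarrow>
     (\<forall>k\<in>X. \<forall>l\<in>X. k \<noteq> l \<longrightarrow> R k l \<longleftrightarrow> \<not> R l k) \<and>
     (\<forall>k\<in>X. \<forall>l\<in>X. \<forall>m\<in>X. k \<noteq> m \<longrightarrow> R k l \<longrightarrow> R l m \<longrightarrow> R k m)"

definition predecessors :: "'a set \<Rightarrow> ('a \<Rightarrow> 'a \<Rightarrow> bool) \<Rightarrow> 'a \<Rightarrow> 'a set" where
  "predecessors X R k = {j\<in>X. j \<noteq> k \<and> R j k}"

lemma transitive_tournament_asym:
  "transitive_tournament X R \<Longrightarrow> k \<in> X \<Longrightarrow> l \<in> X \<Longrightarrow> k \<noteq> l \<Longrightarrow> R k l \<longleftrightarrow> \<not> R l k"
  unfolding transitive_tournament_def by metis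

lemma transitive_tournament_trans:
  "transitive_tournament X R \<Longrightarrow> k \<in> X \<Longrightarrow> l \<in> X \<Longrightarrow> m \<in> X \<Longrightarrow> k \<noteq> m \<Longrightarrow> R k l \<Longrightarrow> R l m
    \<Longrightarrow> R k m"
  unfolding transitive_tournament_def by metis

lemma transitive_tournament_subset:
  "transitive_tournament X R \<Longrightarrow> Y \<subseteq> X \<Longrightarrow> transitive_tournament Y R"
  unfolding transitive_tournament_def by (meson subsetD)

lemma transitive_tournament_converse:
  "transitive_tournament X R \<Longrightarrow> transitive_tournament X (\<lambda>a b. R b a)"
  unfolding transitive_tournament_def by metis

lemma transitive_tournament_has_sink:
  assumes "transitive_tournament X R" "finite X" "X \<noteq> {}"
  shows "\<exists>w\<in>X. \<forall>j\<in>X - {w}. R j w"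
  using assms(2,3,1)
proof (induction X rule: finite_ne_induct)
  case (insert x F)
  then obtain w where w: "w \<in> F" "\<forall>j\<in>F - {w}. R j w"
    using transitive_tournament_subset by blast
  have "w \<noteq> x" using w(1) insert.hyps by blast
  show ?case
  proof (cases "R w x")
    case True
    have "R j x" if "j \<in> F - {w}" for j
      using transitive_tournament_trans[OF insert.prems _ _ _ _ _ True] w that insert.hyps by blast
    then show ?thesis using True by blast
  next
    case False
    then have "R x w" using transitive_tournament_asym[OF insert.prems] w(1) \<open>w \<noteq> x\<close> by blast
    then show ?thesis using w by blast
  qed
qed simp

lemma transitive_tournament_has_source:
  assumes "transitive_tournament X R" "finite X" "X \<noteq> {}"
  shows "\<exists>v\<in>X. \<forall>j\<in>X - {v}. R v j"
  using transitive_tournament_has_sink[OF transitive_tournament_converse[OF assms(1)] assms(2,3)] .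

lemma predecessors_of_sink_of_predecessors:
  assumes "transitive_tournament X R" "k \<in> X"
    and "w \<in> predecessors X R k" "\<forall>j\<in>predecessors X R k - {w}. R j w"
  shows "predecessors X R w = predecessors X R k - {w}"
proof -
  have "j \<in> predecessors X R k" if "j \<in> predecessors X R w" for j
  proof -
    have "j \<noteq> k"
      using that assms(3) transitive_tournament_asym[OF assms(1), of w k]
      unfolding predecessors_def by blast
    then show ?thesis
      using that assms(2,3) transitive_tournament_trans[OF assms(1), of j w k]
      unfolding predecessors_def by blast
  qed
  then show ?thesis using assms(3,4) unfolding predecessors_def by blast
qed

text \<open>Consecutive elements of the tournament get weights of different parity, so monotonicity
  forces the weight to grow by at least one per step.\<close>
lemma transitive_tournament_weight_growth:
  fixes d :: "'a \<Rightarrow> nat"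
  assumes tt: "transitive_tournament X R" and "finite X"
    and mono: "\<And>k l. k \<in> X \<Longrightarrow> l \<in> X \<Longrightarrow> k \<noteq> l \<Longrightarrow> R k l \<Longrightarrow> d k \<le> d l"
    and parity: "\<And>k. k \<in> X \<Longrightarrow> odd (d k + card (predecessors X R k) + c)"
    and source: "v \<in> X" "\<forall>j\<in>X - {v}. R v j"
    and "k \<in> X"
  shows "card (predecessors X R k) + d v \<le> d k"
  using \<open>k \<in> X\<close>
proof (induction "card (predecessors X R k)" arbitrary: k rule: less_induct)
  case less
  have fin: "finite (predecessors X R k)" and sub: "predecessors X R k \<subseteq> X"
    using \<open>finite X\<close> unfolding predecessors_def by auto
  show ?case
  proof (cases "k = v")
    case True
    have "\<not> R j v" if "j \<in> X - {v}" for j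
      using transitive_tournament_asym[OF tt, of v j] source that by auto
    then have "predecessors X R k = {}" using True unfolding predecessors_def by blast
    then show ?thesis using True by simp
  next
    case False
    then have "v \<in> predecessors X R k" using source less.prems unfolding predecessors_def by blast
    then obtain w where w: "w \<in> predecessors X R k" "\<forall>j\<in>predecessors X R k - {w}. R j w"
      using transitive_tournament_has_sink[OF transitive_tournament_subset[OF tt sub] fin] by blast
    have wk: "w \<in> X" "w \<noteq> k" "R w k" using w(1) unfolding predecessors_def by auto
    have card_w: "card (predecessors X R w) = card (predecessors X R k) - 1"
      using predecessors_of_sink_of_predecessors[OF tt less.prems w] fin w(1) by simp
    have pos: "card (predecessors X R k) > 0" using fin w(1) card_gt_0_iff by blast
    have IH: "card (predecessors X R w) + d v \<le> d w"
      using less.hyps[OF _ wk(1)] card_w pos by simp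
    have "d w \<noteq> d k"
    proof
      assume "d w = d k"
      then show False
        using parity[OF wk(1)] parity[OF less.prems] pos unfolding card_w by presburger
    qed
    with mono[OF wk(1) less.prems wk(2,3)] have "d w < d k" by simp
    then show ?thesis using IH card_w pos by simp
  qed
qed

section \<open>The configuration forced by a spin^c set\<close>

text \<open>In the application, \<alpha> and \<beta> are the sizes of the two colour classes, a0 and a1 (b0 and b1)
  count the cross neighbours of the least and the greatest element of the first (second) class,
  and e and f count the indices outside S of either colour.\<close>
lemma parity_balance_if_pos:
  fixes \<alpha> \<beta> a0 a1 b0 b1 e f :: nat
  assumes "1 \<le> \<alpha>" "1 \<le> \<beta>" "\<alpha> - 1 + a0 \<le> a1" "a1 \<le> \<beta>" "\<beta> - 1 + b0 \<le> b1"
    and "odd (a0 + e)" "odd (\<beta> - 1 + b1 + f)"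
    and "0 < a0 \<Longrightarrow> b1 = \<alpha>" "a1 = \<beta> \<Longrightarrow> 0 < b0"
    and "e \<le> 1" "0 < a0"
  shows "even (\<alpha> + \<beta> + e + f)"
proof (rule ccontr)
  assume odd: "odd (\<alpha> + \<beta> + e + f)"
  have "b1 = \<alpha>" using assms(8,11) by simp
  with assms(2,7) odd have "odd e" by presburger
  with assms(10) have "e = 1" by presburger
  with assms(6,11) have "2 \<le> a0" by presburger
  with assms(1-5) \<open>b1 = \<alpha>\<close> have "b0 = 0" by linarith
  with assms(4,9) have "a1 < \<beta>" by fastforce
  with assms(1-3,5) \<open>b1 = \<alpha>\<close> \<open>2 \<le> a0\<close> show False by linarith
qed

lemma parity_balance:
  fixes \<alpha> \<beta> a0 a1 b0 b1 e f :: nat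
  assumes "1 \<le> \<alpha>" "1 \<le> \<beta>"
    and "\<alpha> - 1 + a0 \<le> a1" "a1 \<le> \<beta>" "\<beta> - 1 + b0 \<le> b1" "b1 \<le> \<alpha>"
    and "odd (a0 + e)" "odd (b0 + f)" "odd (\<alpha> - 1 + a1 + e)" "odd (\<beta> - 1 + b1 + f)"
    and "0 < a0 \<longleftrightarrow> b1 = \<alpha>" "0 < b0 \<longleftrightarrow> a1 = \<beta>"
    and "e \<le> 1" "f \<le> 1"
  shows "even (\<alpha> + \<beta> + e + f)"
proof -
  consider "0 < a0" | "0 < b0" | "a0 = 0" "b0 = 0" by blast
  then show ?thesis
  proof cases
    case 1
    then show ?thesis
      using parity_balance_if_pos[of \<alpha> \<beta> a0 a1 b0 b1 e f] assms by blast
  next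
    case 2
    then have "even (\<beta> + \<alpha> + f + e)"
      using parity_balance_if_pos[of \<beta> \<alpha> b0 b1 a0 a1 f e] assms by blast
    then show ?thesis by (simp add: ac_simps)
  next
    case 3
    then have "e = 1" "f = 1" using assms(7,8,13,14) by presburger+
    moreover have "a1 < \<beta>" "b1 < \<alpha>" using 3 assms(4,6,11,12) by auto
    then have "\<alpha> = \<beta>" using assms(1-3,5) 3 by linarith
    ultimately show ?thesis by simp
  qed
qed

text \<open>An HW-matrix with a spin^c set S, abstracted: V is the index set, A i j stands for
  M i j = 3 and T for row_parity M S (see spinc_configuration_of_spinc_set).\<close>
locale spinc_configuration =
  fixes V S :: "'a set" and A :: "'a \<Rightarrow> 'a \<Rightarrow> bool" and T :: "'a \<Rightarrow> bool"
  assumes finite_V: "finite V" and S_subset: "S \<subseteq> V"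
    and arc_in_S: "\<And>k l. k \<in> S \<Longrightarrow> l \<in> S \<Longrightarrow> k \<noteq> l \<Longrightarrow> A k l \<noteq> A l k \<longleftrightarrow> T k = T l"
    and arc_into_S: "\<And>q k. q \<in> V - S \<Longrightarrow> k \<in> S \<Longrightarrow> A q k \<longleftrightarrow> T q = T k"
    and colour_outside_S: "\<And>q q'. q \<in> V - S \<Longrightarrow> q' \<in> V - S \<Longrightarrow> q \<noteq> q' \<Longrightarrow> T q \<noteq> T q'"
    and in_degree_odd: "\<And>j. j \<in> S \<Longrightarrow> odd (card {i\<in>V - {j}. A i j})"
    and triangle: "\<And>i j k. i \<in> S \<Longrightarrow> j \<in> S \<Longrightarrow> k \<in> S \<Longrightarrow> i \<noteq> j \<Longrightarrow> i \<noteq> k \<Longrightarrow> j \<noteq> k \<Longrightarrow>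
      A j i = A k i \<or> A i j = A k j \<or> A i k = A j k"
begin

definition colour_class :: "bool \<Rightarrow> 'a set" where
  "colour_class \<tau> = {k\<in>S. T k = \<tau>}"

definition cross_nbrs :: "'a \<Rightarrow> 'a set" where
  "cross_nbrs k = {m\<in>S. T m \<noteq> T k \<and> A k m}"

definition outside_count :: "bool \<Rightarrow> nat" where
  "outside_count \<tau> = card {q\<in>V - S. T q = \<tau>}"

lemma finite_S: "finite S"
  using finite_V S_subset finite_subset by blast

lemma finite_colour_class: "finite (colour_class \<tau>)"
  using finite_S unfolding colour_class_def by simp

lemma finite_cross_nbrs: "finite (cross_nbrs k)"
  using finite_S unfolding cross_nbrs_def by simp

lemma arc_across_sym: "k \<in> S \<Longrightarrow> m \<in> S \<Longrightarrow> T k \<noteq> T m \<Longrightarrow> A k m = A m k"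
  using arc_in_S[of k m] by (cases "k = m") auto

lemma arc_within_asym: "k \<in> S \<Longrightarrow> l \<in> S \<Longrightarrow> k \<noteq> l \<Longrightarrow> T k = T l \<Longrightarrow> A k l \<longleftrightarrow> \<not> A l k"
  using arc_in_S[of k l] by auto

lemma arc_within_trans:
  assumes "k \<in> S" "l \<in> S" "m \<in> S" "k \<noteq> l" "l \<noteq> m" "k \<noteq> m" "T k = T l" "T l = T m"
    and "A k l" "A l m"
  shows "A k m"
proof (rule ccontr)
  assume "\<not> A k m"
  moreover have "\<not> A l k" "\<not> A m l" "A m k"
    using arc_within_asym assms \<open>\<not> A k m\<close> by metis+
  ultimately show False
    using triangle[of k l m] assms by auto
qed

lemma colour_class_transitive_tournament: "transitive_tournament (colour_class \<tau>) A"
  unfolding transitive_tournament_def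
proof (intro conjI ballI impI)
  fix k l assume "k \<in> colour_class \<tau>" "l \<in> colour_class \<tau>" "k \<noteq> l"
  then show "A k l \<longleftrightarrow> \<not> A l k" by (intro arc_within_asym) (auto simp: colour_class_def)
next
  fix k l m assume k: "k \<in> colour_class \<tau>" and l: "l \<in> colour_class \<tau>" and m: "m \<in> colour_class \<tau>"
    and "k \<noteq> m" "A k l" "A l m"
  then show "A k m"
  proof (cases "k = l \<or> l = m")
    case False
    then show ?thesis
      using arc_within_trans[of k l m] k l m \<open>k \<noteq> m\<close> \<open>A k l\<close> \<open>A l m\<close>
      unfolding colour_class_def by auto
  qed auto
qed

lemma cross_arc_forward:
  assumes "k \<in> S" "l \<in> S" "m \<in> S" "k \<noteq> l" "T k = T l" "T m \<noteq> T k" "A k l" "A k m"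
  shows "A l m"
proof (rule ccontr)
  assume "\<not> A l m"
  moreover have "\<not> A l k" using arc_within_asym assms by metis
  moreover have "A m k" "\<not> A m l" using arc_across_sym assms \<open>\<not> A l m\<close> by metis+
  ultimately show False using triangle[of k l m] assms by auto
qed

lemma cross_nbrs_mono:
  "k \<in> S \<Longrightarrow> l \<in> S \<Longrightarrow> k \<noteq> l \<Longrightarrow> T k = T l \<Longrightarrow> A k l \<Longrightarrow> cross_nbrs k \<subseteq> cross_nbrs l"
  using cross_arc_forward unfolding cross_nbrs_def by auto

lemma cross_nbrs_subset: "k \<in> colour_class \<tau> \<Longrightarrow> cross_nbrs k \<subseteq> colour_class (\<not> \<tau>)"
  unfolding cross_nbrs_def colour_class_def by auto

lemma mem_cross_nbrs_sym: "k \<in> S \<Longrightarrow> m \<in> cross_nbrs k \<Longrightarrow> k \<in> cross_nbrs m"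
  using arc_across_sym unfolding cross_nbrs_def by auto

lemma colour_class_parity:
  assumes "k \<in> colour_class \<tau>"
  shows "odd (card (cross_nbrs k) + card (predecessors (colour_class \<tau>) A k) + outside_count \<tau>)"
proof -
  have k: "k \<in> S" "T k = \<tau>" using assms unfolding colour_class_def by auto
  let ?Q = "{q\<in>V - S. T q = \<tau>}"
  have "A i k \<longleftrightarrow> A k i" if "i \<in> S" "T i \<noteq> \<tau>" for i
    using arc_across_sym[of k i] k that by auto
  moreover have "A i k \<longleftrightarrow> T i = \<tau>" if "i \<in> V - S" for i
    using arc_into_S[OF that k(1)] k by simp
  ultimately have "{i\<in>V - {k}. A i k} = (predecessors (colour_class \<tau>) A k \<union> cross_nbrs k) \<union> ?Q"
    using S_subset k unfolding colour_class_def cross_nbrs_def predecessors_def by auto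
  moreover have "finite (predecessors (colour_class \<tau>) A k)" "finite ?Q"
    using finite_colour_class finite_V unfolding predecessors_def by auto
  moreover have "predecessors (colour_class \<tau>) A k \<inter> cross_nbrs k = {}"
    "(predecessors (colour_class \<tau>) A k \<union> cross_nbrs k) \<inter> ?Q = {}"
    using k unfolding colour_class_def cross_nbrs_def predecessors_def by auto
  ultimately have "card {i\<in>V - {k}. A i k}
      = card (predecessors (colour_class \<tau>) A k) + card (cross_nbrs k) + outside_count \<tau>"
    unfolding outside_count_def by (simp add: card_Un_disjoint finite_cross_nbrs)
  then show ?thesis using in_degree_odd[OF k(1)] by (simp add: ac_simps)
qed

lemma outside_count_le_1: "outside_count \<tau> \<le> 1"
proof -
  have "card {q\<in>V - S. T q = \<tau>} \<le> Suc 0"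
    using finite_V colour_outside_S by (subst card_le_Suc0_iff_eq) auto
  then show ?thesis unfolding outside_count_def by simp
qed

lemma card_V_split:
  "card V = card (colour_class True) + card (colour_class False) + outside_count True + outside_count False"
proof -
  let ?Q = "\<lambda>\<tau>. {q\<in>V - S. T q = \<tau>}"
  have "V = (colour_class True \<union> colour_class False) \<union> (?Q True \<union> ?Q False)"
    using S_subset unfolding colour_class_def by auto
  moreover have "card (colour_class True \<union> colour_class False) = card (colour_class True) + card (colour_class False)"
    by (rule card_Un_disjoint) (use finite_S in \<open>auto simp: colour_class_def\<close>)
  moreover have "card (?Q True \<union> ?Q False) = outside_count True + outside_count False"
    unfolding outside_count_def by (rule card_Un_disjoint) (use finite_V in auto)
  moreover have "card ((colour_class True \<union> colour_class False) \<union> (?Q True \<union> ?Q False))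
      = card (colour_class True \<union> colour_class False) + card (?Q True \<union> ?Q False)"
    by (rule card_Un_disjoint) (use finite_V finite_S in \<open>auto simp: colour_class_def\<close>)
  ultimately show ?thesis by simp
qed

lemma colour_class_extremes:
  assumes v: "v \<in> colour_class \<tau>" "\<forall>j\<in>colour_class \<tau> - {v}. A v j"
    and W: "W \<in> colour_class \<tau>" "\<forall>j\<in>colour_class \<tau> - {W}. A j W"
  shows "card (colour_class \<tau>) - 1 + card (cross_nbrs v) \<le> card (cross_nbrs W)"
    and "odd (card (cross_nbrs v) + outside_count \<tau>)"
    and "odd (card (colour_class \<tau>) - 1 + card (cross_nbrs W) + outside_count \<tau>)"
proof -
  have tt: "transitive_tournament (colour_class \<tau>) A"
    by (rule colour_class_transitive_tournament)
  have "predecessors (colour_class \<tau>) A v = {}"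
    using v transitive_tournament_asym[OF tt] unfolding predecessors_def by blast
  then show "odd (card (cross_nbrs v) + outside_count \<tau>)"
    using colour_class_parity[OF v(1)] by simp
  have "predecessors (colour_class \<tau>) A W = colour_class \<tau> - {W}"
    using W unfolding predecessors_def by blast
  then have card_pred_W: "card (predecessors (colour_class \<tau>) A W) = card (colour_class \<tau>) - 1"
    using W(1) finite_colour_class by simp
  then show "odd (card (colour_class \<tau>) - 1 + card (cross_nbrs W) + outside_count \<tau>)"
    using colour_class_parity[OF W(1)] by (simp add: ac_simps)
  have "card (cross_nbrs k) \<le> card (cross_nbrs l)"
    if "k \<in> colour_class \<tau>" "l \<in> colour_class \<tau>" "k \<noteq> l" "A k l" for k l
    using that cross_nbrs_mono[of k l] finite_cross_nbrs
    by (intro card_mono) (auto simp: colour_class_def)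
  from transitive_tournament_weight_growth[OF tt finite_colour_class this colour_class_parity v W(1)]
  show "card (colour_class \<tau>) - 1 + card (cross_nbrs v) \<le> card (cross_nbrs W)"
    unfolding card_pred_W .
qed

lemma source_cross_nbrs_nonempty_iff:
  assumes v: "v \<in> colour_class \<tau>" "\<forall>j\<in>colour_class \<tau> - {v}. A v j"
    and W: "W \<in> colour_class (\<not> \<tau>)" "\<forall>j\<in>colour_class (\<not> \<tau>) - {W}. A j W"
  shows "cross_nbrs v \<noteq> {} \<longleftrightarrow> card (cross_nbrs W) = card (colour_class \<tau>)"
proof
  have vS: "v \<in> S" "T v = \<tau>" and WS: "W \<in> S" "T W = (\<not> \<tau>)"
    using v(1) W(1) unfolding colour_class_def by auto
  assume "cross_nbrs v \<noteq> {}"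
  then obtain m where m: "m \<in> S" "T m = (\<not> \<tau>)" "A v m"
    using vS unfolding cross_nbrs_def by auto
  have "A W v"
  proof (cases "m = W")
    case True
    then show ?thesis using m vS WS arc_across_sym by metis
  next
    case False
    then have "A m W" "A m v" using W m vS arc_across_sym unfolding colour_class_def by auto
    then show ?thesis using cross_arc_forward[of m W v] False m vS WS by auto
  qed
  have "l \<in> cross_nbrs W" if l: "l \<in> colour_class \<tau>" for l
  proof (cases "l = v")
    case True
    then show ?thesis using \<open>A W v\<close> vS WS unfolding cross_nbrs_def by auto
  next
    case False
    have lS: "l \<in> S" "T l = \<tau>" using l unfolding colour_class_def by auto
    have "A v l" using v l False by auto
    moreover have "A v W" using arc_across_sym[of v W] \<open>A W v\<close> vS WS by auto
    ultimately have "A l W" using cross_arc_forward[of v l W] False vS WS lS by auto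
    then show ?thesis using arc_across_sym[of l W] lS WS unfolding cross_nbrs_def by auto
  qed
  then have "cross_nbrs W = colour_class \<tau>" using cross_nbrs_subset[OF W(1)] by auto
  then show "card (cross_nbrs W) = card (colour_class \<tau>)" by simp
next
  assume "card (cross_nbrs W) = card (colour_class \<tau>)"
  then have "cross_nbrs W = colour_class \<tau>"
    using card_subset_eq[OF finite_colour_class cross_nbrs_subset[OF W(1)]] by simp
  then have "W \<in> cross_nbrs v"
    using v(1) W(1) mem_cross_nbrs_sym unfolding colour_class_def by auto
  then show "cross_nbrs v \<noteq> {}" by auto
qed

lemma colour_class_source_sink:
  assumes "colour_class \<tau> \<noteq> {}"
  obtains v W where "v \<in> colour_class \<tau>" "\<forall>j\<in>colour_class \<tau> - {v}. A v j"
    and "W \<in> colour_class \<tau>" "\<forall>j\<in>colour_class \<tau> - {W}. A j W"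
  using transitive_tournament_has_source[OF colour_class_transitive_tournament finite_colour_class assms]
    transitive_tournament_has_sink[OF colour_class_transitive_tournament finite_colour_class assms]
  by blast

lemma odd_card_V_le_3:
  assumes "odd (card V)"
  shows "card V \<le> 3"
proof (cases "colour_class True = {} \<or> colour_class False = {}")
  case True
  then obtain \<tau> where empty: "colour_class (\<not> \<tau>) = {}" by (metis (full_types))
  have "card (colour_class \<tau>) \<le> 1"
  proof (cases "colour_class \<tau> = {}")
    case False
    then obtain v W where v: "v \<in> colour_class \<tau>" "\<forall>j\<in>colour_class \<tau> - {v}. A v j"
      and W: "W \<in> colour_class \<tau>" "\<forall>j\<in>colour_class \<tau> - {W}. A j W"
      by (rule colour_class_source_sink)
    have "cross_nbrs W = {}" using cross_nbrs_subset[OF W(1)] empty by auto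
    then show ?thesis using colour_class_extremes(1)[OF v W] by simp
  qed simp
  then show ?thesis
    using card_V_split empty outside_count_le_1[of True] outside_count_le_1[of False]
    by (cases \<tau>) auto
next
  case False
  then obtain vA WA where vA: "vA \<in> colour_class True" "\<forall>j\<in>colour_class True - {vA}. A vA j"
    and WA: "WA \<in> colour_class True" "\<forall>j\<in>colour_class True - {WA}. A j WA"
    using colour_class_source_sink by metis
  obtain vB WB where vB: "vB \<in> colour_class False" "\<forall>j\<in>colour_class False - {vB}. A vB j"
    and WB: "WB \<in> colour_class False" "\<forall>j\<in>colour_class False - {WB}. A j WB"
    using False colour_class_source_sink by metis
  have iff_A: "0 < card (cross_nbrs vA) \<longleftrightarrow> card (cross_nbrs WB) = card (colour_class True)"
    using source_cross_nbrs_nonempty_iff[of vA True WB] vA WB finite_cross_nbrs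
    by (auto simp: card_gt_0_iff)
  have iff_B: "0 < card (cross_nbrs vB) \<longleftrightarrow> card (cross_nbrs WA) = card (colour_class False)"
    using source_cross_nbrs_nonempty_iff[of vB False WA] vB WA finite_cross_nbrs
    by (auto simp: card_gt_0_iff)
  have le_A: "card (cross_nbrs WA) \<le> card (colour_class False)"
    using card_mono[OF finite_colour_class cross_nbrs_subset[OF WA(1)]] by simp
  have le_B: "card (cross_nbrs WB) \<le> card (colour_class True)"
    using card_mono[OF finite_colour_class cross_nbrs_subset[OF WB(1)]] by simp
  have "1 \<le> card (colour_class True)" "1 \<le> card (colour_class False)"
    using vA(1) vB(1) finite_colour_class by (auto simp: Suc_le_eq card_gt_0_iff)
  from parity_balance[OF this colour_class_extremes(1)[OF vA WA] le_A
      colour_class_extremes(1)[OF vB WB] le_B colour_class_extremes(2)[OF vA WA]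
      colour_class_extremes(2)[OF vB WB] colour_class_extremes(3)[OF vA WA]
      colour_class_extremes(3)[OF vB WB] iff_A iff_B outside_count_le_1 outside_count_le_1]
  have "even (card V)" unfolding card_V_split .
  with assms show ?thesis by simp
qed

end

lemma spinc_configuration_of_spinc_set:
  assumes "HW_matrix n M" "4 \<le> n" "spinc_set n M S"
  shows "spinc_configuration {1..n} S (\<lambda>i j. M i j = 3) (row_parity M S)"
proof
  show S_subset: "S \<subseteq> {1..n}" using assms(3) unfolding spinc_set_def by blast
  note pair = row_parity_eq_iff[OF assms(1,3)]
  show "(M k l = 3) \<noteq> (M l k = 3) \<longleftrightarrow> row_parity M S k = row_parity M S l"
    if "k \<in> S" "l \<in> S" "k \<noteq> l" for k l
    using pair[of k l] subsetD[OF S_subset] that by auto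
  show "M q k = 3 \<longleftrightarrow> row_parity M S q = row_parity M S k" if "q \<in> {1..n} - S" "k \<in> S" for q k
    using pair[of q k] subsetD[OF S_subset] that by auto
  show "row_parity M S q \<noteq> row_parity M S q'" if "q \<in> {1..n} - S" "q' \<in> {1..n} - S" "q \<noteq> q'" for q q'
    using pair[of q q'] that by auto
  show "odd (card {i\<in>{1..n} - {j}. M i j = 3})" if "j \<in> S" for j
    using HW_column_threes_odd[OF assms(1)] S_subset that by blast
  show "(M j i = 3 \<longleftrightarrow> M k i = 3) \<or> (M i j = 3 \<longleftrightarrow> M k j = 3) \<or> (M i k = 3 \<longleftrightarrow> M j k = 3)"
    if "i \<in> S" "j \<in> S" "k \<in> S" "i \<noteq> j" "i \<noteq> k" "j \<noteq> k" for i j k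
  proof -
    have "{i, j, k} \<subseteq> {1..n}" using S_subset that(1-3) by blast
    then show ?thesis using HW_triangle[OF assms(1,2) _ that(4-6)] by simp
  qed
qed simp

theorem mainTheorem18:
  fixes n :: nat and M :: "nat \<Rightarrow> nat \<Rightarrow> nat"
  assumes "n \<ge> 5" and "odd n" and "HW_matrix n M"
  shows "\<not> (\<exists>S. spinc_set n M S)"
proof
  assume "\<exists>S. spinc_set n M S"
  then obtain S where "spinc_set n M S" ..
  then interpret spinc_configuration "{1..n}" S "\<lambda>i j. M i j = 3" "row_parity M S"
    using spinc_configuration_of_spinc_set assms(1,3) by simp
  have "n \<le> 3" using odd_card_V_le_3 \<open>odd n\<close> by simp
  with \<open>n \<ge> 5\<close> show False by simp
qed

end
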